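(* Let $\alpha>-1$, $j\in\mathbb{N}\cup\{0\}$, $M>0$. Let $\{l_n^{(\alpha)}\}_{n\ge0}$ be the orthonormal Laguerre polynomials with respect to $x^\alpha e^{-x}$ on $(0,\infty)$, normalized so that $l_n^{(\alpha)}(0)>0$, let $\lambda_n=n$, $K_n^{(j,j)}(0,0)=\sum_{i=0}^n\big((l_i^{(\alpha)})^{(j)}(0)\big)^2$, and define $$\widetilde\lambda_n=\lambda_n+M\sum_{i=j+1}^n(\lambda_i-\lambda_{i-1})K_{i-1}^{(j,j)}(0,0),\qquad n\ge j+1.$$ Then $$\lim_{n\to+\infty}\frac{\widetilde\lambda_n}{n^{2j+\alpha+2}}=\frac{M}{(2j+\alpha+2)(2j+\alpha+1)\Gamma^2(\alpha+j+1)}.$$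
   Context: Background: $\lambda_n=n$ are the eigenvalues of the Laguerre equation $-xy''+(x-\alpha-1)y'=ny$, and $\widetilde\lambda_n$ are the eigenvalues of the differential operator $\mathbf{L}$ having as eigenfunctions the polynomials orthonormal with respect to $(f,g)=\int_0^\infty fg\,x^\alpha e^{-x}dx+Mf^{(j)}(0)g^{(j)}(0)$ (with the free parameters $\alpha_1=\dots=\alpha_j=0$). The sign normalization of $l_n^{(\alpha)}$ does not affect the quantities involved. *)

theory Defs
  imports "HOL-Analysis.Analysis" "HOL-Computational_Algebra.Polynomial"
begin

definition laguerre :: "real \<Rightarrow> nat \<Rightarrow> real poly" where
  "laguerre a n = (\<Sum>k\<le>n. monom (((real n + a) gchoose (n - k)) * (-1) ^ k / fact k) k)"

text \<open>Orthonormal Laguerre polynomial w.r.t. x^alpha e^(-x) on (0,inf), with positive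
  value at 0: l_n = sqrt(n! / Gamma(n+alpha+1)) * L_n.\<close>
definition lag_on :: "real \<Rightarrow> nat \<Rightarrow> real poly" where
  "lag_on a n = smult (sqrt (fact n / Gamma (real n + a + 1))) (laguerre a n)"

definition lag_eig :: "nat \<Rightarrow> real" where
  "lag_eig n = real n"

definition Kjj :: "real \<Rightarrow> nat \<Rightarrow> nat \<Rightarrow> real" where
  "Kjj a j n = (\<Sum>i\<le>n. (poly ((pderiv ^^ j) (lag_on a i)) 0) ^ 2)"

definition lam_tilde :: "real \<Rightarrow> nat \<Rightarrow> real \<Rightarrow> nat \<Rightarrow> real" where
  "lam_tilde a j M n = lag_eig n + M * (\<Sum>i\<in>{j+1..n}. (lag_eig i - lag_eig (i - 1)) * Kjj a j (i - 1))"

end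

theory Submission
  imports Defs "HOL-Real_Asymp.Real_Asymp"
begin

(*
  Evaluating the explicit Laguerre coefficients at the origin gives
  (l_n^(j)(0))^2 = n! Gamma(n+alpha+1) / ((n-j)!^2 Gamma(alpha+j+1)^2), and
  Gamma(m+w+1) ~ m! m^w turns this into n^(2j+alpha) / Gamma(alpha+j+1)^2 asymptotically.
  As lambda_i - lambda_(i-1) = 1, the difference (tilde lambda_n) - n is M times a partial sum of
  the kernels K_i(0,0), which are themselves partial sums of these squares. By Stolz-Cesaro,
  summing a sequence ~ C n^p with p > -1 gives ~ C n^(p+1) / (p+1); doing it twice yields the
  factor 1 / ((2j+alpha+1)(2j+alpha+2)).
*)

lemma stolz_cesaro_telescope:
  fixes a b :: "nat \<Rightarrow> real"
  assumes incr: "\<And>n. b n < b (Suc n)"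
    and ratio: "\<And>n. N \<le> n \<Longrightarrow> \<bar>(a (Suc n) - a n) / (b (Suc n) - b n) - L\<bar> \<le> e"
    and "N \<le> n"
  shows "\<bar>a n - a N - L * (b n - b N)\<bar> \<le> e * (b n - b N)"
  using \<open>N \<le> n\<close>
proof (induction n rule: dec_induct)
  case (step n)
  define d where "d = b (Suc n) - b n"
  have "d > 0" using incr[of n] by (simp add: d_def)
  then have "a (Suc n) - a n - L * d = ((a (Suc n) - a n) / d - L) * d"
    by (simp add: field_simps)
  then have "\<bar>a (Suc n) - a n - L * d\<bar> \<le> e * d"
    using ratio[OF step.hyps(1)] \<open>d > 0\<close> by (simp add: abs_mult d_def mult_right_mono)
  then show ?case
    using step.IH by (simp add: d_def abs_le_iff algebra_simps)
qed simp

lemma stolz_cesaro: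
  fixes a b :: "nat \<Rightarrow> real"
  assumes incr: "\<And>n. b n < b (Suc n)"
    and b_lim: "filterlim b at_top sequentially"
    and ratio_lim: "(\<lambda>n. (a (Suc n) - a n) / (b (Suc n) - b n)) \<longlonglongrightarrow> L"
  shows "(\<lambda>n. a n / b n) \<longlonglongrightarrow> L"
proof (rule tendstoI)
  fix r :: real
  assume "r > 0"
  define e where "e = r / 2"
  have "e > 0" using \<open>r > 0\<close> by (simp add: e_def)
  have "eventually (\<lambda>n. \<bar>(a (Suc n) - a n) / (b (Suc n) - b n) - L\<bar> < e \<and> b n \<ge> 0) sequentially"
    using tendstoD[OF ratio_lim \<open>e > 0\<close>] b_lim
    by (auto simp: dist_real_def filterlim_at_top elim: eventually_conj)
  then obtain N where N: "\<And>n. N \<le> n \<Longrightarrow>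
      \<bar>(a (Suc n) - a n) / (b (Suc n) - b n) - L\<bar> < e \<and> b n \<ge> 0"
    by (auto simp: eventually_sequentially)
  have "\<bar>(a (Suc n) - a n) / (b (Suc n) - b n) - L\<bar> \<le> e" if "N \<le> n" for n
    using N[OF that] by simp
  then have telescope: "\<bar>a n - a N - L * (b n - b N)\<bar> \<le> e * (b n - b N)" if "N \<le> n" for n
    using stolz_cesaro_telescope[where a = a and b = b and L = L and e = e and N = N] incr that
    by blast
  define C where "C = \<bar>a N - L * b N\<bar>"
  have "(\<lambda>n. C / b n) \<longlonglongrightarrow> 0"
    using b_lim by (intro tendsto_divide_0[OF tendsto_const] filterlim_at_top_imp_at_infinity)
  then have "eventually (\<lambda>n. C / b n < e \<and> b n > 0 \<and> N \<le> n) sequentially"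
    using \<open>e > 0\<close> b_lim
    by (intro eventually_conj order_tendstoD(2) eventually_ge_at_top)
       (auto simp: filterlim_at_top_dense)
  then show "eventually (\<lambda>n. dist (a n / b n) L < r) sequentially"
  proof eventually_elim
    case (elim n)
    then have "b n > 0" "N \<le> n" by auto
    have "\<bar>a n / b n - L\<bar> = \<bar>(a n - a N - L * (b n - b N)) / b n + (a N - L * b N) / b n\<bar>"
      using \<open>b n > 0\<close> by (simp add: field_simps)
    also have "\<dots> \<le> e * (b n - b N) / b n + C / b n"
      using telescope[OF \<open>N \<le> n\<close>] \<open>b n > 0\<close> unfolding C_def
      by (intro order_trans[OF abs_triangle_ineq] add_mono) (auto simp: divide_right_mono)
    also have "e * (b n - b N) / b n \<le> e"
      using N[OF order_refl] \<open>b n > 0\<close> \<open>e > 0\<close> by (simp add: field_simps)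
    finally have "\<bar>a n / b n - L\<bar> \<le> e + C / b n" by simp
    then show ?case
      using elim unfolding dist_real_def e_def by linarith
  qed
qed

lemma LIMSEQ_powr_of_increments:
  fixes F :: "nat \<Rightarrow> real"
  assumes "p > -1"
    and incr_lim: "(\<lambda>n. (F (Suc n) - F n) / real n powr p) \<longlonglongrightarrow> c"
  shows "(\<lambda>n. F n / real n powr (p + 1)) \<longlonglongrightarrow> c / (p + 1)"
proof (rule stolz_cesaro)
  show "real n powr (p + 1) < real (Suc n) powr (p + 1)" for n
    using \<open>p > -1\<close> by (intro powr_less_mono2) auto
  show "filterlim (\<lambda>n. real n powr (p + 1)) at_top sequentially"
    using \<open>p > -1\<close> by real_asymp
  have "(\<lambda>n. (F (Suc n) - F n) / real n powr p *
      (real n powr p / (real (Suc n) powr (p + 1) - real n powr (p + 1)))) \<longlonglongrightarrow> c * inverse (p + 1)"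
    using \<open>p > -1\<close> by (intro tendsto_mult incr_lim) real_asymp
  moreover have "eventually (\<lambda>n. (F (Suc n) - F n) / real n powr p *
      (real n powr p / (real (Suc n) powr (p + 1) - real n powr (p + 1))) =
      (F (Suc n) - F n) / (real (Suc n) powr (p + 1) - real n powr (p + 1))) sequentially"
    using eventually_gt_at_top[of 0] by eventually_elim simp
  ultimately have "(\<lambda>n. (F (Suc n) - F n) / (real (Suc n) powr (p + 1) - real n powr (p + 1)))
      \<longlonglongrightarrow> c * inverse (p + 1)"
    by (rule Lim_transform_eventually)
  then show "(\<lambda>n. (F (Suc n) - F n) / (real (Suc n) powr (p + 1) - real n powr (p + 1)))
      \<longlonglongrightarrow> c / (p + 1)"
    by (simp add: divide_inverse)
qed

lemma LIMSEQ_powr_offset_iff: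
  fixes f :: "nat \<Rightarrow> real"
  shows "(\<lambda>n. f (n + k) / real n powr p) \<longlonglongrightarrow> c \<longleftrightarrow> (\<lambda>n. f n / real n powr p) \<longlonglongrightarrow> c"
proof -
  have "(\<lambda>n. f (n + k) / real n powr p) \<longlonglongrightarrow> c \<longleftrightarrow>
      (\<lambda>n. f (n + k) / real (n + k) powr p) \<longlonglongrightarrow> c"
  proof
    assume "(\<lambda>n. f (n + k) / real n powr p) \<longlonglongrightarrow> c"
    moreover have "(\<lambda>n. real n powr p / real (n + k) powr p) \<longlonglongrightarrow> 1"
      by real_asymp
    moreover have "eventually (\<lambda>n. f (n + k) / real n powr p * (real n powr p / real (n + k) powr p)
        = f (n + k) / real (n + k) powr p) sequentially"
      using eventually_gt_at_top[of 0] by eventually_elim simp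
    ultimately show "(\<lambda>n. f (n + k) / real (n + k) powr p) \<longlonglongrightarrow> c"
      using Lim_transform_eventually[OF tendsto_mult] by fastforce
  next
    assume "(\<lambda>n. f (n + k) / real (n + k) powr p) \<longlonglongrightarrow> c"
    moreover have "(\<lambda>n. real (n + k) powr p / real n powr p) \<longlonglongrightarrow> 1"
      by real_asymp
    moreover have "eventually (\<lambda>n. f (n + k) / real (n + k) powr p * (real (n + k) powr p / real n powr p)
        = f (n + k) / real n powr p) sequentially"
      using eventually_gt_at_top[of 0] by eventually_elim simp
    ultimately show "(\<lambda>n. f (n + k) / real n powr p) \<longlonglongrightarrow> c"
      using Lim_transform_eventually[OF tendsto_mult] by fastforce
  qed
  also have "\<dots> \<longleftrightarrow> (\<lambda>n. f n / real n powr p) \<longlonglongrightarrow> c"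
    using LIMSEQ_ignore_initial_segment[of "\<lambda>n. f n / real n powr p" c k]
      LIMSEQ_offset[of "\<lambda>n. f n / real n powr p" k]
    by blast
  finally show ?thesis .
qed

lemma Gamma_over_fact_powr_LIMSEQ:
  fixes w :: real
  assumes "w > -1"
  shows "(\<lambda>n. Gamma (real n + w + 1) / (fact n * real n powr w)) \<longlonglongrightarrow> 1"
proof -
  have "Gamma (w + 1) > 0" using assms by simp
  then have "(\<lambda>n. Gamma (w + 1) / Gamma_series' (w + 1) n) \<longlonglongrightarrow> Gamma (w + 1) / Gamma (w + 1)"
    by (intro tendsto_divide tendsto_const Gamma_series'_LIMSEQ) simp
  moreover have "eventually (\<lambda>n. Gamma (w + 1) / Gamma_series' (w + 1) n =
      Gamma (real n + w + 1) / (fact n * real n powr w)) sequentially"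
    using eventually_gt_at_top[of 0]
  proof eventually_elim
    case (elim n)
    have "w + 1 \<notin> \<int>\<^sub>\<le>\<^sub>0" using assms by auto
    then have "pochhammer (w + 1) n = Gamma (real n + w + 1) / Gamma (w + 1)"
      by (simp add: pochhammer_Gamma add_ac)
    moreover have "exp ((w + 1) * ln (real n)) = real n * real n powr w"
      using elim by (simp add: powr_def [of "real n"] powr_add algebra_simps exp_add)
    moreover have "fact (n - 1) * (real n * real n powr w) = fact n * real n powr w"
      using elim by (simp add: fact_reduce)
    ultimately have "Gamma_series' (w + 1) n =
        fact n * real n powr w / (Gamma (real n + w + 1) / Gamma (w + 1))"
      by (simp add: Gamma_series'_def)
    moreover have "Gamma (real n + w + 1) > 0" "real n powr w > 0"
      using assms elim by auto
    ultimately show ?case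
      using \<open>Gamma (w + 1) > 0\<close> by simp
  qed
  ultimately show ?thesis
    using \<open>Gamma (w + 1) > 0\<close> by (simp add: tendsto_cong)
qed

lemma poly_higher_pderiv_0:
  fixes p :: "'a :: {comm_semiring_1, semiring_no_zero_divisors, semiring_char_0} poly"
  shows "poly ((pderiv ^^ j) p) 0 = fact j * coeff p j"
  by (simp add: poly_0_coeff_0 coeff_higher_pderiv pochhammer_fact)

lemma coeff_laguerre:
  assumes "k \<le> n"
  shows "coeff (laguerre a n) k = ((real n + a) gchoose (n - k)) * (-1) ^ k / fact k"
  using assms by (simp add: laguerre_def coeff_sum coeff_monom)

lemma lag_on_higher_pderiv_0_sq:
  assumes "a > -1" and "j \<le> n"
  shows "(poly ((pderiv ^^ j) (lag_on a n)) 0)\<^sup>2 =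
    fact n * Gamma (real n + a + 1) / ((fact (n - j))\<^sup>2 * (Gamma (a + real j + 1))\<^sup>2)"
proof -
  have G: "Gamma (real n + a + 1) > 0" "Gamma (a + real j + 1) > 0"
    using assms(1) by auto
  have "real n + a + 1 \<notin> \<int>\<^sub>\<le>\<^sub>0" using assms(1) by auto
  then have "(real n + a) gchoose (n - j) =
      Gamma (real n + a + 1) / (fact (n - j) * Gamma (a + real j + 1))"
    using assms(2) by (simp add: gbinomial_Gamma of_nat_diff add_ac)
  moreover have "poly ((pderiv ^^ j) (lag_on a n)) 0 =
      (-1) ^ j * sqrt (fact n / Gamma (real n + a + 1)) * ((real n + a) gchoose (n - j))"
    using assms(2) by (simp add: poly_higher_pderiv_0 lag_on_def coeff_laguerre)
  ultimately have "(poly ((pderiv ^^ j) (lag_on a n)) 0)\<^sup>2 =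
      ((-1) ^ j)\<^sup>2 * (sqrt (fact n / Gamma (real n + a + 1)))\<^sup>2 *
      (Gamma (real n + a + 1) / (fact (n - j) * Gamma (a + real j + 1)))\<^sup>2"
    by (simp only: power_mult_distrib)
  also have "\<dots> = fact n / Gamma (real n + a + 1) *
      (Gamma (real n + a + 1) / (fact (n - j) * Gamma (a + real j + 1)))\<^sup>2"
    using G by (simp flip: power_mult)
  also have "\<dots> = fact n * Gamma (real n + a + 1) / ((fact (n - j))\<^sup>2 * (Gamma (a + real j + 1))\<^sup>2)"
    using G by (simp add: field_simps power2_eq_square)
  finally show ?thesis .
qed

lemma lag_on_higher_pderiv_0_sq_LIMSEQ:
  assumes "a > -1"
  shows "(\<lambda>n. (poly ((pderiv ^^ j) (lag_on a n)) 0)\<^sup>2 / real n powr (2 * real j + a))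
    \<longlonglongrightarrow> 1 / (Gamma (a + real j + 1))\<^sup>2"
proof -
  define G where "G = Gamma (a + real j + 1)"
  have "G > 0" unfolding G_def using assms by (intro Gamma_real_pos) simp
  have "(\<lambda>m. Gamma (real m + real j + 1) / (fact m * real m powr real j) *
      (Gamma (real m + (real j + a) + 1) / (fact m * real m powr (real j + a))) / G\<^sup>2)
      \<longlonglongrightarrow> 1 * 1 / G\<^sup>2"
    using assms \<open>G > 0\<close> by (intro tendsto_intros Gamma_over_fact_powr_LIMSEQ) auto
  moreover have "eventually (\<lambda>m.
      Gamma (real m + real j + 1) / (fact m * real m powr real j) *
      (Gamma (real m + (real j + a) + 1) / (fact m * real m powr (real j + a))) / G\<^sup>2 =
      (poly ((pderiv ^^ j) (lag_on a (m + j))) 0)\<^sup>2 / real m powr (2 * real j + a)) sequentially"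
    using eventually_gt_at_top[of 0]
  proof eventually_elim
    case (elim m)
    have "fact (m + j) = Gamma (real m + real j + 1)"
      using Gamma_fact[of "m + j", where 'a = real] by (simp add: add_ac)
    moreover have "Gamma (real (m + j) + a + 1) = Gamma (real m + (real j + a) + 1)"
      by (simp add: add_ac)
    ultimately have sq: "(poly ((pderiv ^^ j) (lag_on a (m + j))) 0)\<^sup>2 =
        Gamma (real m + real j + 1) * Gamma (real m + (real j + a) + 1) / ((fact m)\<^sup>2 * G\<^sup>2)"
      using lag_on_higher_pderiv_0_sq[OF assms, of j "m + j"] by (simp add: G_def)
    have "real m powr (2 * real j + a) = real m powr real j * real m powr (real j + a)"
      by (simp flip: powr_add add: algebra_simps)
    then show ?case
      unfolding sq using \<open>G > 0\<close> elim by (simp add: field_simps power2_eq_square)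
  qed
  ultimately have "(\<lambda>m. (poly ((pderiv ^^ j) (lag_on a (m + j))) 0)\<^sup>2 / real m powr (2 * real j + a))
      \<longlonglongrightarrow> 1 / G\<^sup>2"
    by (simp add: tendsto_cong)
  then show ?thesis
    unfolding G_def
    using LIMSEQ_powr_offset_iff[where f = "\<lambda>n. (poly ((pderiv ^^ j) (lag_on a n)) 0)\<^sup>2"] by simp
qed

lemma Kjj_LIMSEQ:
  assumes "a > -1"
  shows "(\<lambda>n. Kjj a j n / real n powr (2 * real j + a + 1))
    \<longlonglongrightarrow> 1 / (Gamma (a + real j + 1))\<^sup>2 / (2 * real j + a + 1)"
proof (rule LIMSEQ_powr_of_increments)
  show "2 * real j + a > -1" using assms by simp
  have "(\<lambda>n. (poly ((pderiv ^^ j) (lag_on a (n + 1))) 0)\<^sup>2 / real n powr (2 * real j + a))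
      \<longlonglongrightarrow> 1 / (Gamma (a + real j + 1))\<^sup>2"
    using lag_on_higher_pderiv_0_sq_LIMSEQ[OF assms, of j]
      LIMSEQ_powr_offset_iff[where f = "\<lambda>n. (poly ((pderiv ^^ j) (lag_on a n)) 0)\<^sup>2" and k = 1]
    by simp
  then show "(\<lambda>n. (Kjj a j (Suc n) - Kjj a j n) / real n powr (2 * real j + a))
      \<longlonglongrightarrow> 1 / (Gamma (a + real j + 1))\<^sup>2"
    by (simp add: Kjj_def)
qed

lemma sum_Kjj_LIMSEQ:
  assumes "a > -1"
  shows "(\<lambda>n. (\<Sum>i\<in>{j..<n}. Kjj a j i) / real n powr (2 * real j + a + 2))
    \<longlonglongrightarrow> 1 / (Gamma (a + real j + 1))\<^sup>2 / (2 * real j + a + 1) / (2 * real j + a + 2)"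
proof -
  have "eventually (\<lambda>n. Kjj a j n / real n powr (2 * real j + a + 1) =
      ((\<Sum>i\<in>{j..<Suc n}. Kjj a j i) - (\<Sum>i\<in>{j..<n}. Kjj a j i)) / real n powr (2 * real j + a + 1))
      sequentially"
    using eventually_ge_at_top[of j] by eventually_elim simp
  then have incr_lim: "(\<lambda>n. ((\<Sum>i\<in>{j..<Suc n}. Kjj a j i) - (\<Sum>i\<in>{j..<n}. Kjj a j i)) /
      real n powr (2 * real j + a + 1)) \<longlonglongrightarrow> 1 / (Gamma (a + real j + 1))\<^sup>2 / (2 * real j + a + 1)"
    by (rule Lim_transform_eventually[OF Kjj_LIMSEQ[OF assms]])
  have "(\<lambda>n. (\<Sum>i\<in>{j..<n}. Kjj a j i) / real n powr (2 * real j + a + 1 + 1))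
      \<longlonglongrightarrow> 1 / (Gamma (a + real j + 1))\<^sup>2 / (2 * real j + a + 1) / (2 * real j + a + 1 + 1)"
    by (rule LIMSEQ_powr_of_increments[OF _ incr_lim]) (use assms in simp)
  then show ?thesis
    by (simp only: add.assoc one_add_one)
qed

lemma lam_tilde_eq_sum_Kjj:
  "lam_tilde a j M n = real n + M * (\<Sum>i\<in>{j..<n}. Kjj a j i)"
proof -
  have "(\<Sum>i\<in>{j+1..n}. (lag_eig i - lag_eig (i - 1)) * Kjj a j (i - 1)) =
      (\<Sum>i\<in>{Suc j..<Suc n}. Kjj a j (i - 1))"
    by (intro sum.cong) (auto simp: lag_eig_def of_nat_diff)
  also have "\<dots> = (\<Sum>i\<in>{j..<n}. Kjj a j i)"
    unfolding sum.shift_bounds_Suc_ivl by simp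
  finally show ?thesis
    by (simp add: lam_tilde_def lag_eig_def)
qed

theorem mainTheorem6:
  fixes a M :: real and j :: nat
  assumes "a > -1" and "M > 0"
  shows "(\<lambda>n. lam_tilde a j M n / real n powr (2 * real j + a + 2))
           \<longlonglongrightarrow> M / ((2 * real j + a + 2) * (2 * real j + a + 1) * (Gamma (a + real j + 1))\<^sup>2)"
proof -
  \<comment> \<open>The limit is linear in M.\<close>
  have "(\<lambda>n. real n / real n powr (2 * real j + a + 2)) \<longlonglongrightarrow> 0"
    using assms(1) by real_asymp
  then have "(\<lambda>n. real n / real n powr (2 * real j + a + 2) +
      M * ((\<Sum>i\<in>{j..<n}. Kjj a j i) / real n powr (2 * real j + a + 2)))
      \<longlonglongrightarrow> 0 + M * (1 / (Gamma (a + real j + 1))\<^sup>2 / (2 * real j + a + 1) / (2 * real j + a + 2))"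
    by (intro tendsto_intros sum_Kjj_LIMSEQ assms(1))
  then show ?thesis
    by (simp add: lam_tilde_eq_sum_Kjj add_divide_distrib field_simps)
qed

end
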